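(* Let $l\in\mathbb N-\frac12$ and let $V$ be a simple weight $(\mathbb Ch+\tilde{\mathcal H}^{(l)})$-module on which $z$ acts as a nonzero scalar $\dot z$, such that $\mathrm{supp}(V)\subseteq\lambda+\mathbb Z$ for some $\lambda\in\mathbb C$ with $\dim V_\lambda<\infty$. (i) If $l=\frac12$, then $V$ is a highest weight module, or a lowest weight module, or $V$ is isomorphic to $D(a,\dot z)$ for some $a\in\mathbb C\setminus\mathbb Z$, where $h$ acts on $D(a,\dot z)$ by $hx^i=(\mu-i)x^i$ for some $\mu\in\mathbb C$. (ii) If $l\in\mathbb N+\frac12$ (i.e. $l\ge\frac32$), then $V$ is a highest weight module or a lowest weight module.
   Context: For $l\in\mathbb N-\frac12$, $\tilde{\mathcal H}^{(l)}$ has basis $p_0,\dots,p_{2l},z$ with $z$ central and $[p_k,p_{k'}]=\delta_{k+k',2l}(-1)^{k+l+\frac12}k!(2l-k)!\,z$; the Lie algebra $\mathbb Ch+\tilde{\mathcal H}^{(l)}$ has additionally $[h,p_k]=2(l-k)p_k$, $[h,z]=0$. A weight module is one on which $h$ acts diagonalizably; $V_\lambda=\{v:hv=\lambda v\}$, $\mathrm{supp}(V)=\{\lambda:V_\lambda\ne0\}$. A highest (resp. lowest) weight module is one generated by a weight vector annihilated by all $p_k$ with $k<l$ (resp. $k>l$). For $\dot z\ne0$ and $a\in\mathbb C$, $D(a,\dot z)$ is the $\tilde{\mathcal H}^{(1/2)}$-module $\mathbb C[x,x^{-1}]$ with $p_1x^i=x^{i+1}$, $p_0x^i=-\dot z(a+i)x^{i-1}$,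 $zx^i=\dot zx^i$ ($i\in\mathbb Z$). *)

theory Defs
  imports Complex_Main
begin

(* Throughout, l = m + 1/2 with m :: nat, so 2l = 2m+1 and the basis of the
   Heisenberg part is p_0,...,p_{2m+1}, z.  A module V is a complex vector
   space ('v with scalar multiplication scale, satisfying vector_space scale)
   together with operators H (action of h), P k (action of p_k) and Z (action
   of z). *)

definition heis_coeff :: "nat \<Rightarrow> nat \<Rightarrow> complex" where
  "heis_coeff m k = (-1) ^ (k + m + 1) * of_nat (fact k * fact (2*m + 1 - k))"
  (* (-1)^(k+l+1/2) k! (2l-k)!  with l = m + 1/2 *)

definition is_hmod ::
  "(complex \<Rightarrow> 'v::ab_group_add \<Rightarrow> 'v) \<Rightarrow> nat \<Rightarrow> ('v \<Rightarrow> 'v) \<Rightarrow> (nat \<Rightarrow> 'v \<Rightarrow> 'v) \<Rightarrow> ('v \<Rightarrow> 'v) \<Rightarrow> bool" where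
  "is_hmod scale m H P Z \<longleftrightarrow>
     vector_space scale \<and>
     Vector_Spaces.linear scale scale H \<and> Vector_Spaces.linear scale scale Z \<and>
     (\<forall>k \<le> 2*m+1. Vector_Spaces.linear scale scale (P k)) \<and>
     (\<forall>k \<le> 2*m+1. \<forall>v. H (P k v) - P k (H v) = scale (2 * of_nat m + 1 - 2 * of_nat k) (P k v)) \<and>
     (\<forall>v. H (Z v) - Z (H v) = 0) \<and>
     (\<forall>k \<le> 2*m+1. \<forall>v. P k (Z v) - Z (P k v) = 0) \<and>
     (\<forall>k \<le> 2*m+1. \<forall>k' \<le> 2*m+1. \<forall>v.
        P k (P k' v) - P k' (P k v) = scale (if k + k' = 2*m+1 then heis_coeff m k else 0) (Z v))"

definition weight_space :: "(complex \<Rightarrow> 'v \<Rightarrow> 'v) \<Rightarrow> ('v \<Rightarrow> 'v) \<Rightarrow> complex \<Rightarrow> 'v set" where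
  "weight_space scale H \<mu> = {v. H v = scale \<mu> v}"

definition invariant_sub ::
  "(complex \<Rightarrow> 'v::ab_group_add \<Rightarrow> 'v) \<Rightarrow> nat \<Rightarrow> ('v \<Rightarrow> 'v) \<Rightarrow> (nat \<Rightarrow> 'v \<Rightarrow> 'v) \<Rightarrow> ('v \<Rightarrow> 'v) \<Rightarrow> 'v set \<Rightarrow> bool" where
  "invariant_sub scale m H P Z S \<longleftrightarrow> module.subspace scale S \<and>
     (\<forall>v\<in>S. H v \<in> S \<and> Z v \<in> S \<and> (\<forall>k \<le> 2*m+1. P k v \<in> S))"

definition simple_mod ::
  "(complex \<Rightarrow> 'v::ab_group_add \<Rightarrow> 'v) \<Rightarrow> nat \<Rightarrow> ('v \<Rightarrow> 'v) \<Rightarrow> (nat \<Rightarrow> 'v \<Rightarrow> 'v) \<Rightarrow> ('v \<Rightarrow> 'v) \<Rightarrow> bool" where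
  "simple_mod scale m H P Z \<longleftrightarrow> (\<exists>v::'v. v \<noteq> 0) \<and>
     (\<forall>S. invariant_sub scale m H P Z S \<longrightarrow> S = {0} \<or> S = UNIV)"

definition weight_mod :: "(complex \<Rightarrow> 'v::ab_group_add \<Rightarrow> 'v) \<Rightarrow> ('v \<Rightarrow> 'v) \<Rightarrow> bool" where
  "weight_mod scale H \<longleftrightarrow> module.span scale (\<Union>\<mu>. weight_space scale H \<mu>) = UNIV"

definition supp :: "(complex \<Rightarrow> 'v::ab_group_add \<Rightarrow> 'v) \<Rightarrow> ('v \<Rightarrow> 'v) \<Rightarrow> complex set" where
  "supp scale H = {\<mu>. weight_space scale H \<mu> \<noteq> {0}}"

definition fin_dim_sub :: "(complex \<Rightarrow> 'v::ab_group_add \<Rightarrow> 'v) \<Rightarrow> 'v set \<Rightarrow> bool" where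
  "fin_dim_sub scale S \<longleftrightarrow> (\<exists>B. finite B \<and> B \<subseteq> S \<and> module.span scale B = S)"

definition gen_sub ::
  "(complex \<Rightarrow> 'v::ab_group_add \<Rightarrow> 'v) \<Rightarrow> nat \<Rightarrow> ('v \<Rightarrow> 'v) \<Rightarrow> (nat \<Rightarrow> 'v \<Rightarrow> 'v) \<Rightarrow> ('v \<Rightarrow> 'v) \<Rightarrow> 'v \<Rightarrow> 'v set" where
  "gen_sub scale m H P Z v = \<Inter>{S. invariant_sub scale m H P Z S \<and> v \<in> S}"

(* highest weight: generated by a weight vector killed by all p_k with k < l, i.e. k \<le> m *)
definition highest_weight_mod ::
  "(complex \<Rightarrow> 'v::ab_group_add \<Rightarrow> 'v) \<Rightarrow> nat \<Rightarrow> ('v \<Rightarrow> 'v) \<Rightarrow> (nat \<Rightarrow> 'v \<Rightarrow> 'v) \<Rightarrow> ('v \<Rightarrow> 'v) \<Rightarrow> bool" where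
  "highest_weight_mod scale m H P Z \<longleftrightarrow> (\<exists>v \<mu>. v \<noteq> 0 \<and> H v = scale \<mu> v \<and>
     (\<forall>k \<le> m. P k v = 0) \<and> gen_sub scale m H P Z v = UNIV)"

(* lowest weight: generated by a weight vector killed by all p_k with k > l, i.e. m+1 \<le> k \<le> 2m+1 *)
definition lowest_weight_mod ::
  "(complex \<Rightarrow> 'v::ab_group_add \<Rightarrow> 'v) \<Rightarrow> nat \<Rightarrow> ('v \<Rightarrow> 'v) \<Rightarrow> (nat \<Rightarrow> 'v \<Rightarrow> 'v) \<Rightarrow> ('v \<Rightarrow> 'v) \<Rightarrow> bool" where
  "lowest_weight_mod scale m H P Z \<longleftrightarrow> (\<exists>v \<mu>. v \<noteq> 0 \<and> H v = scale \<mu> v \<and>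
     (\<forall>k. m + 1 \<le> k \<and> k \<le> 2*m+1 \<longrightarrow> P k v = 0) \<and> gen_sub scale m H P Z v = UNIV)"

(* V (a module for l = 1/2, operators H, P 0, P 1, Z) is isomorphic to D(a, zd) with
   h x^i = (\<mu> - i) x^i: an isomorphism D(a,zd) \<rightarrow> V is the same as a basis (e i)_{i\<in>\<int>}
   of V (the images of the basis vectors x^i) on which the operators act as on x^i. *)
definition iso_D ::
  "(complex \<Rightarrow> 'v::ab_group_add \<Rightarrow> 'v) \<Rightarrow> ('v \<Rightarrow> 'v) \<Rightarrow> (nat \<Rightarrow> 'v \<Rightarrow> 'v) \<Rightarrow> ('v \<Rightarrow> 'v) \<Rightarrow> complex \<Rightarrow> complex \<Rightarrow> complex \<Rightarrow> bool" where
  "iso_D scale H P Z a zd \<mu> \<longleftrightarrow> (\<exists>e :: int \<Rightarrow> 'v.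
     inj e \<and> \<not> module.dependent scale (range e) \<and> module.span scale (range e) = UNIV \<and>
     (\<forall>i. P 1 (e i) = e (i + 1) \<and>
          P 0 (e i) = scale (- zd * (a + of_int i)) (e (i - 1)) \<and>
          Z (e i) = scale zd (e i) \<and>
          H (e i) = scale (\<mu> - of_int i) (e i)))"

end

theory Submission
  imports Defs "HOL-Computational_Algebra.Fundamental_Theorem_Algebra"
begin

text \<open>
  Each p_k is either locally nilpotent or injective: the vectors killed by some power of p_k form
  a submodule, since commuting p_k^n past any p_k' only produces a multiple of p_k^(n-1). The dual
  operators p_k and p_(2l-k) cannot both be locally nilpotent, their bracket being a nonzero
  scalar. If all p_k with k < l (or all with k > l) are locally nilpotent, these commuting
  operators have a common null weight vector, which then generates V.

  Otherwise some p_k with k < l and some p_j with j > l are injective. For l >= 3/2 they can be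
  chosen non-dual and with one of them of weight +-1 (so that V_lambda is nonzero). Then
  X = p_k^q p_j^p and N = p_(2l-k) p_k have weight 0, X is injective and [N, X] = s X with s /= 0;
  an eigenvector v of N in the finite-dimensional V_lambda gives the eigenvectors X^n v with the
  pairwise distinct eigenvalues r + n s, too many for V_lambda.
  For l = 1/2 both p_0 and p_1 are injective and, by Schur's lemma on V_lambda, the Casimir element
  acts by a scalar. Hence p_1 p_0 is a scalar on every weight space, nonzero by injectivity, and
  suitably normalised vectors p_1^i v and p_0^i v form the basis of D(a, z).
\<close>

sublocale vector_space \<subseteq> endo: vector_space_pair scale scale ..

context vector_space
begin

lemma linear_funpow:
  assumes "Vector_Spaces.linear scale scale T"
  shows "Vector_Spaces.linear scale scale (T ^^ n)"
proof (induction n)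
  case (Suc n)
  then show ?case
    using Vector_Spaces.linear_compose[OF Suc assms] by (simp add: o_def)
qed (simp add: linear_id id_def[symmetric])

lemma subspace_eventually_killed:
  assumes T: "Vector_Spaces.linear scale scale T"
  shows "subspace {v. \<exists>n. (T ^^ n) v = 0}"
proof (rule subspaceI)
  have lin: "Vector_Spaces.linear scale scale (T ^^ n)" for n
    by (rule linear_funpow[OF T])
  have later: "(T ^^ (j + n)) v = 0" if "(T ^^ n) v = 0" for j n v
    using that endo.linear_0[OF lin] by (simp add: funpow_add)
  show "0 \<in> {v. \<exists>n. (T ^^ n) v = 0}"
    using endo.linear_0[OF lin] by auto
  show "x + y \<in> {v. \<exists>n. (T ^^ n) v = 0}"
    if "x \<in> {v. \<exists>n. (T ^^ n) v = 0}" "y \<in> {v. \<exists>n. (T ^^ n) v = 0}" for x y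
  proof -
    from that obtain a b where "(T ^^ a) x = 0" "(T ^^ b) y = 0" by blast
    then have "(T ^^ (b + a)) x = 0" "(T ^^ (a + b)) y = 0" by (simp_all add: later)
    then have "(T ^^ (a + b)) (x + y) = 0" by (simp add: endo.linear_add[OF lin] add.commute)
    then show ?thesis by blast
  qed
  show "c *s x \<in> {v. \<exists>n. (T ^^ n) v = 0}" if "x \<in> {v. \<exists>n. (T ^^ n) v = 0}" for c x
    using that by (auto simp: endo.linear_scale[OF lin])
qed

lemma funpow_in_subspace:
  assumes "\<forall>w\<in>W. T w \<in> W" "v \<in> W"
  shows "(T ^^ n) v \<in> W"
  by (induction n) (use assms in auto)

lemma linear_stable_span:
  assumes F: "Vector_Spaces.linear scale scale F" and stable: "\<forall>v\<in>S. F v \<in> span S"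
    and v: "v \<in> span S"
  shows "F v \<in> span S"
proof -
  have "F ` span S \<subseteq> span (F ` S)"
    by (rule endo.linear_spans_image[OF F]) simp
  also have "\<dots> \<subseteq> span S"
    using stable span_mono[of "F ` S" "span S"] by (auto simp: span_span)
  finally show ?thesis
    using v by blast
qed

lemma independent_eigenvectors:
  assumes T: "Vector_Spaces.linear scale scale T"
    and eigen: "\<forall>v\<in>S. v \<noteq> 0 \<and> T v = e v *s v" and inj: "inj_on e S"
  shows "independent S"
proof -
  have "\<forall>u. (\<Sum>v\<in>t. u v *s v) = 0 \<longrightarrow> (\<forall>v\<in>t. u v = 0)" if "finite t" "t \<subseteq> S" for t
    using that
  proof (induction t rule: finite_induct)
    case (insert a t)
    show ?case
    proof (intro allI impI)
      fix u assume sum0: "(\<Sum>v\<in>insert a t. u v *s v) = 0"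
      \<comment> \<open>apply \<open>T - e a\<close> to kill the \<open>a\<close>-component\<close>
      have "0 = T (\<Sum>v\<in>insert a t. u v *s v) - e a *s (\<Sum>v\<in>insert a t. u v *s v)"
        by (simp add: sum0 endo.linear_0[OF T])
      also have "\<dots> = (\<Sum>v\<in>insert a t. u v *s T v - (e a * u v) *s v)"
        by (simp add: endo.linear_sum[OF T] endo.linear_scale[OF T] scale_sum_right
            sum_subtractf del: sum.insert)
      also have "\<dots> = (\<Sum>v\<in>insert a t. ((e v - e a) * u v) *s v)"
      proof (rule sum.cong)
        fix v assume "v \<in> insert a t"
        then have "u v *s T v = (e v * u v) *s v"
          using insert.prems eigen by (auto simp: mult.commute)
        then show "u v *s T v - (e a * u v) *s v = ((e v - e a) * u v) *s v"
          by (simp add: left_diff_distrib scale_left_diff_distrib)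
      qed simp
      also have "\<dots> = (\<Sum>v\<in>t. ((e v - e a) * u v) *s v)"
        using insert.hyps by simp
      finally have "(\<Sum>v\<in>t. ((e v - e a) * u v) *s v) = 0"
        by simp
      then have "\<forall>v\<in>t. (e v - e a) * u v = 0"
        using insert.IH[rule_format, of "\<lambda>v. (e v - e a) * u v"] insert.prems by simp
      moreover have "e v \<noteq> e a" if "v \<in> t" for v
        using that insert.hyps insert.prems inj by (auto simp: inj_on_def)
      ultimately have ut: "\<forall>v\<in>t. u v = 0"
        by auto
      then have "u a *s a = 0"
        using sum0 insert.hyps by simp
      then show "\<forall>v\<in>insert a t. u v = 0"
        using ut eigen insert.prems by auto
    qed
  qed simp
  then show ?thesis
    unfolding dependent_explicit by blast
qed

lemma independent_eigenvector_family:
  assumes T: "Vector_Spaces.linear scale scale T"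
    and eigen: "\<forall>i\<in>I. f i \<noteq> 0 \<and> T (f i) = e i *s f i" and inj: "inj_on e I"
  shows "independent (f ` I)" and "inj_on f I"
proof -
  show inj_f: "inj_on f I"
  proof (rule inj_onI)
    fix i j assume ij: "i \<in> I" "j \<in> I" "f i = f j"
    then have "(e i - e j) *s f i = 0"
      using eigen by (metis scale_left_diff_distrib right_minus_eq)
    then show "i = j"
      using eigen inj ij by (auto simp: inj_on_def)
  qed
  show "independent (f ` I)"
    using inj_f eigen inj
    by (intro independent_eigenvectors[OF T, of _ "\<lambda>v. e (inv_into I f v)"]) (auto simp: inj_on_def)
qed

end

locale complex_vector_space = vector_space scale
  for scale :: "complex \<Rightarrow> 'v::ab_group_add \<Rightarrow> 'v" (infixr \<open>*s\<close> 75)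
begin

definition poly_apply :: "('v \<Rightarrow> 'v) \<Rightarrow> complex poly \<Rightarrow> 'v \<Rightarrow> 'v" where
  "poly_apply T p v = (\<Sum>i\<le>degree p. coeff p i *s (T ^^ i) v)"

lemma poly_apply_bound:
  assumes "degree p \<le> K"
  shows "poly_apply T p v = (\<Sum>i\<le>K. coeff p i *s (T ^^ i) v)"
  unfolding poly_apply_def
  by (rule sum.mono_neutral_left) (use assms in \<open>auto simp: coeff_eq_0\<close>)

lemma poly_apply_add: "poly_apply T (p + q) v = poly_apply T p v + poly_apply T q v"
proof -
  define K where "K = max (degree p) (degree q)"
  have "degree (p + q) \<le> K" "degree p \<le> K" "degree q \<le> K"
    by (simp_all add: K_def degree_add_le)
  then show ?thesis
    by (simp add: poly_apply_bound[of _ K] scale_left_distrib sum.distrib)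
qed

lemma poly_apply_smult: "poly_apply T (smult c p) v = c *s poly_apply T p v"
  by (simp add: poly_apply_bound[of "smult c p" "degree p"] poly_apply_def scale_sum_right)

lemma poly_apply_diff: "poly_apply T (p - q) v = poly_apply T p v - poly_apply T q v"
  using poly_apply_add[of T "p - q" q v] by simp

lemma poly_apply_monom: "poly_apply T (monom c i) v = c *s (T ^^ i) v"
proof -
  have "poly_apply T (monom c i) v = (\<Sum>j\<le>i. (if i = j then c else 0) *s (T ^^ j) v)"
    by (simp add: poly_apply_bound[of _ i] degree_monom_le coeff_monom)
  also have "\<dots> = (\<Sum>j\<le>i. if j = i then c *s (T ^^ j) v else 0)"
    by (rule sum.cong) auto
  finally show ?thesis
    by simp
qed

lemma poly_apply_0: "poly_apply T 0 v = 0"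
  by (simp add: poly_apply_def)

lemma poly_apply_sum: "poly_apply T (\<Sum>x\<in>A. p x) v = (\<Sum>x\<in>A. poly_apply T (p x) v)"
  by (induction A rule: infinite_finite_induct)
    (simp_all add: poly_apply_add poly_apply_0)

lemma poly_apply_pCons_0:
  assumes "Vector_Spaces.linear scale scale T"
  shows "poly_apply T (pCons 0 p) v = T (poly_apply T p v)"
proof -
  have "poly_apply T (pCons 0 p) v = (\<Sum>i\<le>Suc (degree p). coeff (pCons 0 p) i *s (T ^^ i) v)"
    by (rule poly_apply_bound) (simp add: degree_pCons_le)
  also have "\<dots> = (\<Sum>i\<le>degree p. coeff p i *s T ((T ^^ i) v))"
    by (subst sum.atMost_Suc_shift) simp
  finally show ?thesis
    by (simp add: poly_apply_def endo.linear_sum[OF assms] endo.linear_scale[OF assms])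
qed

lemma poly_apply_linear_factor:
  assumes "Vector_Spaces.linear scale scale T"
  shows "poly_apply T ([:-r, 1:] * q) v = T (poly_apply T q v) - r *s poly_apply T q v"
proof -
  have "[:-r, 1:] * q = pCons 0 q - smult r q"
    by (simp add: mult_pCons_left)
  then show ?thesis
    by (simp add: poly_apply_diff poly_apply_smult poly_apply_pCons_0[OF assms])
qed

lemma poly_apply_in_subspace:
  assumes "subspace W" "\<forall>w\<in>W. T w \<in> W" "v \<in> W"
  shows "poly_apply T p v \<in> W"
  unfolding poly_apply_def
  by (intro subspace_sum subspace_scale funpow_in_subspace assms)

text \<open>The first \<open>card B + 1\<close> iterates of \<open>w\<close> either repeat or are linearly dependent.\<close>

lemma ex_annihilating_poly:
  assumes B: "finite B" and stable: "\<forall>v\<in>span B. T v \<in> span B" and w: "w \<in> span B"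
  shows "\<exists>q. q \<noteq> 0 \<and> poly_apply T q w = 0"
proof -
  define n where "n = card B"
  define f where "f i = (T ^^ i) w" for i
  show ?thesis
  proof (cases "inj_on f {..n}")
    case False
    then obtain i j where ij: "i \<noteq> j" "f i = f j"
      by (auto simp: inj_on_def)
    have "monom 1 i - monom 1 j \<noteq> (0 :: complex poly)"
      using ij(1) by (simp add: monom_eq_iff')
    moreover have "poly_apply T (monom 1 i - monom 1 j) w = 0"
      using ij(2) by (simp add: poly_apply_diff poly_apply_monom f_def)
    ultimately show ?thesis by blast
  next
    case True
    define S where "S = f ` {..n}"
    have "dependent S"
    proof (rule ccontr)
      assume "independent S"
      moreover have "S \<subseteq> span B"
        unfolding S_def f_def using funpow_in_subspace[OF stable w] by auto
      ultimately have "card S \<le> n"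
        using independent_span_bound[OF B] by (auto simp: n_def)
      then show False
        using True by (simp add: S_def card_image)
    qed
    moreover have "finite S"
      by (simp add: S_def)
    ultimately obtain u where u: "\<exists>v\<in>S. u v \<noteq> 0" "(\<Sum>v\<in>S. u v *s v) = 0"
      using dependent_finite by blast
    define q where "q = (\<Sum>i\<le>n. monom (u (f i)) i)"
    obtain i where "i \<le> n" "u (f i) \<noteq> 0"
      using u(1) by (auto simp: S_def)
    then have "coeff q i \<noteq> 0"
      by (simp add: q_def coeff_sum coeff_monom)
    then have "q \<noteq> 0"
      by auto
    have "poly_apply T q w = (\<Sum>i\<le>n. u (f i) *s f i)"
      by (simp add: q_def poly_apply_sum poly_apply_monom f_def)
    also have "\<dots> = (\<Sum>v\<in>S. u v *s v)"
      unfolding S_def by (simp add: sum.reindex[OF True])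
    finally have "poly_apply T q w = 0"
      using u(2) by simp
    with \<open>q \<noteq> 0\<close> show ?thesis
      by blast
  qed
qed

lemma ex_eigenvector_of_annihilating_poly:
  assumes T: "Vector_Spaces.linear scale scale T"
    and W: "subspace W" "\<forall>v\<in>W. T v \<in> W" and w: "w \<in> W" "w \<noteq> 0"
    and q: "q \<noteq> 0" "poly_apply T q w = 0"
  shows "\<exists>v\<in>W. v \<noteq> 0 \<and> (\<exists>r. T v = r *s v)"
  using q
proof (induction "degree q" arbitrary: q)
  case 0
  then have "poly_apply T q w = coeff q 0 *s w" "coeff q 0 \<noteq> 0"
    by (simp_all add: poly_apply_def) (metis leading_coeff_0_iff)
  then show ?case
    using 0 w by simp
next
  case (Suc d)
  have "\<not> constant (poly q)"
    using Suc.hyps(2) constant_degree by force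
  then obtain r where "poly q r = 0"
    using fundamental_theorem_of_algebra by blast
  then obtain q' where q': "q = [:-r, 1:] * q'"
    by (auto simp: poly_eq_0_iff_dvd elim: dvdE)
  have "q' \<noteq> 0"
    using Suc.prems(1) q' by auto
  have "degree q = degree [:-r, 1:] + degree q'"
    unfolding q' by (rule degree_mult_eq) (use \<open>q' \<noteq> 0\<close> in auto)
  then have "degree q' = d"
    using Suc.hyps(2) by simp
  define x where "x = poly_apply T q' w"
  have "T x = r *s x"
    using Suc.prems(2) unfolding q' poly_apply_linear_factor[OF T] x_def by simp
  moreover have "x \<in> W"
    unfolding x_def by (rule poly_apply_in_subspace[OF W w(1)])
  ultimately show ?case
    using Suc.hyps(1)[OF \<open>degree q' = d\<close>[symmetric] \<open>q' \<noteq> 0\<close>] x_def by (cases "x = 0") auto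
qed

lemma ex_eigenvector_in_finite_span:
  assumes T: "Vector_Spaces.linear scale scale T"
    and B: "finite B" and stable: "\<forall>v\<in>span B. T v \<in> span B"
    and w: "w \<in> span B" "w \<noteq> 0"
  shows "\<exists>v\<in>span B. v \<noteq> 0 \<and> (\<exists>r. T v = r *s v)"
  using ex_annihilating_poly[OF B stable w(1)]
    ex_eigenvector_of_annihilating_poly[OF T subspace_span stable w] by blast

lemma no_injective_ladder_on_finite_span:
  assumes N: "Vector_Spaces.linear scale scale N" and X: "Vector_Spaces.linear scale scale X"
    and ladder: "\<And>v. N (X v) = X (N v) + s *s X v" and "s \<noteq> 0"
    and X_inj: "\<And>v. X v = 0 \<Longrightarrow> v = 0"
    and B: "finite B" and N_stable: "\<forall>v\<in>span B. N v \<in> span B"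
    and X_stable: "\<forall>v\<in>span B. X v \<in> span B"
    and w: "w \<in> span B" "w \<noteq> 0"
  shows False
proof -
  obtain v0 r where v0: "v0 \<in> span B" "v0 \<noteq> 0" "N v0 = r *s v0"
    using ex_eigenvector_in_finite_span[OF N B N_stable w] by blast
  define f where "f n = (X ^^ n) v0" for n
  have f_nonzero: "f n \<noteq> 0" for n
    unfolding f_def by (induction n) (use v0(2) X_inj in auto)
  have f_eigen: "N (f n) = (r + of_nat n * s) *s f n" for n
  proof (induction n)
    case (Suc n)
    have "N (f (Suc n)) = X (N (f n)) + s *s X (f n)"
      by (simp add: f_def ladder)
    also have "\<dots> = (r + of_nat (Suc n) * s) *s f (Suc n)"
      using Suc unfolding f_def
      by (simp add: endo.linear_add[OF X] endo.linear_scale[OF X] algebra_simps scale_left_distrib)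
    finally show ?case .
  qed (simp add: f_def v0(3))
  have "inj (\<lambda>n. r + of_nat n * s)"
    using \<open>s \<noteq> 0\<close> by (auto simp: inj_on_def)
  then have "independent (range f)" "inj f"
    using independent_eigenvector_family[OF N, of UNIV f "\<lambda>n. r + of_nat n * s"] f_nonzero f_eigen
    by auto
  moreover have "range f \<subseteq> span B"
    unfolding f_def using funpow_in_subspace[OF X_stable v0(1)] by auto
  ultimately have "finite (range f)"
    using independent_span_bound[OF B] by blast
  with \<open>inj f\<close> show False
    using finite_imageD by blast
qed

end

lemma funpow_last_nonzero:
  fixes f :: "'a::zero \<Rightarrow> 'a"
  assumes "(f ^^ n) v = 0" "v \<noteq> 0"
  shows "\<exists>j. (f ^^ j) v \<noteq> 0 \<and> f ((f ^^ j) v) = 0"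
  using assms
proof (induction n arbitrary: v)
  case (Suc n)
  show ?case
  proof (cases "f v = 0")
    case False
    with Suc obtain j where "(f ^^ j) (f v) \<noteq> 0" "f ((f ^^ j) (f v)) = 0"
      by (metis funpow_Suc_right o_apply)
    then show ?thesis
      by (metis funpow_Suc_right o_apply)
  qed (use Suc.prems in \<open>auto intro: exI[of _ 0]\<close>)
qed simp

lemma ex_nat_combination:
  fixes t :: int and p q :: nat
  assumes "p = 1 \<or> q = 1" "p \<ge> 1" "q \<ge> 1"
  shows "\<exists>a b :: nat. t + int a * int p = int b * int q"
  using assms(1)
proof
  assume "p = 1"
  have "\<bar>t\<bar> \<le> \<bar>t\<bar> * int q"
    using assms(3) by (simp add: mult_le_cancel_left1)
  then show ?thesis
    using \<open>p = 1\<close> by (intro exI[of _ "nat (\<bar>t\<bar> * int q - t)"] exI[of _ "nat \<bar>t\<bar>"]) auto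
next
  assume "q = 1"
  have "\<bar>t\<bar> \<le> \<bar>t\<bar> * int p"
    using assms(2) by (simp add: mult_le_cancel_left1)
  then show ?thesis
    using \<open>q = 1\<close> by (intro exI[of _ "nat \<bar>t\<bar>"] exI[of _ "nat (t + \<bar>t\<bar> * int p)"]) auto
qed

locale heis_rep = complex_vector_space scale
  for scale :: "complex \<Rightarrow> 'v::ab_group_add \<Rightarrow> 'v" (infixr \<open>*s\<close> 75) +
  fixes m :: nat and H Z :: "'v \<Rightarrow> 'v" and P :: "nat \<Rightarrow> 'v \<Rightarrow> 'v" and zd :: complex
  assumes hmod: "is_hmod scale m H P Z" and Z_eq: "Z v = zd *s v"
begin

definition p_weight :: "nat \<Rightarrow> complex" where
  "p_weight k = 2 * of_nat m + 1 - 2 * of_nat k"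

definition p_bracket :: "nat \<Rightarrow> nat \<Rightarrow> complex" where
  "p_bracket k k' = (if k + k' = 2*m+1 then heis_coeff m k else 0) * zd"

definition locally_nilpotent :: "nat \<Rightarrow> bool" where
  "locally_nilpotent k \<longleftrightarrow> (\<forall>v. \<exists>n. (P k ^^ n) v = 0)"

lemma linear_H: "Vector_Spaces.linear scale scale H"
  using hmod by (simp add: is_hmod_def)

lemma linear_P: "k \<le> 2*m+1 \<Longrightarrow> Vector_Spaces.linear scale scale (P k)"
  using hmod by (simp add: is_hmod_def)

lemma linear_P_pow: "k \<le> 2*m+1 \<Longrightarrow> Vector_Spaces.linear scale scale (P k ^^ n)"
  by (rule linear_funpow[OF linear_P])

lemma H_P:
  assumes "k \<le> 2*m+1"
  shows "H (P k v) = P k (H v) + p_weight k *s P k v"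
proof -
  have "H (P k v) - P k (H v) = p_weight k *s P k v"
    using hmod assms unfolding is_hmod_def p_weight_def by blast
  then show ?thesis
    by (simp add: diff_eq_eq add.commute)
qed

lemma P_P:
  assumes "k \<le> 2*m+1" "k' \<le> 2*m+1"
  shows "P k (P k' v) = P k' (P k v) + p_bracket k k' *s v"
proof -
  have "P k (P k' v) - P k' (P k v) = p_bracket k k' *s v"
    using hmod assms unfolding is_hmod_def p_bracket_def Z_eq by simp
  then show ?thesis
    by (simp add: diff_eq_eq add.commute)
qed

lemma p_bracket_nonzero: "zd \<noteq> 0 \<Longrightarrow> k + k' = 2*m+1 \<Longrightarrow> p_bracket k k' \<noteq> 0"
  by (simp add: p_bracket_def heis_coeff_def)

lemma p_weight_lower: "k \<le> m \<Longrightarrow> p_weight k = of_nat (2 * (m - k) + 1)"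
  by (simp add: p_weight_def of_nat_diff)

lemma p_weight_upper: "m < k \<Longrightarrow> p_weight k = - of_nat (2 * (k - m) - 1)"
  by (simp add: p_weight_def of_nat_diff)

lemma H_P_pow:
  assumes "k \<le> 2*m+1"
  shows "H ((P k ^^ n) v) = (P k ^^ n) (H v) + (of_nat n * p_weight k) *s (P k ^^ n) v"
proof (induction n)
  case (Suc n)
  then show ?case
    using assms
    by (simp add: H_P endo.linear_add[OF linear_P] endo.linear_scale[OF linear_P]
        algebra_simps scale_left_distrib)
qed simp

lemma weight_P_pow:
  assumes "k \<le> 2*m+1" "H v = \<mu> *s v"
  shows "H ((P k ^^ n) v) = (\<mu> + of_nat n * p_weight k) *s (P k ^^ n) v"
  using assms by (simp add: H_P_pow endo.linear_scale[OF linear_P_pow] scale_left_distrib)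

lemma P_P_pow:
  assumes "a \<le> 2*m+1" "b \<le> 2*m+1"
  shows "P a ((P b ^^ Suc n) v)
    = (P b ^^ Suc n) (P a v) + (of_nat (Suc n) * p_bracket a b) *s (P b ^^ n) v"
proof (induction n)
  case (Suc n)
  have "P a ((P b ^^ Suc (Suc n)) v)
      = P b (P a ((P b ^^ Suc n) v)) + p_bracket a b *s (P b ^^ Suc n) v"
    using P_P[OF assms] by simp
  also have "\<dots> = (P b ^^ Suc (Suc n)) (P a v)
      + (of_nat (Suc n) * p_bracket a b) *s (P b ^^ Suc n) v + p_bracket a b *s (P b ^^ Suc n) v"
    using Suc assms by (simp add: endo.linear_add[OF linear_P] endo.linear_scale[OF linear_P])
  also have "of_nat (Suc n) * p_bracket a b = of_nat (Suc (Suc n)) * p_bracket a b - p_bracket a b"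
    by (simp add: algebra_simps)
  finally show ?case
    by (simp add: scale_left_diff_distrib)
qed (simp add: P_P[OF assms])

lemma P_P_pow_commute:
  assumes "a \<le> 2*m+1" "b \<le> 2*m+1" "a + b \<noteq> 2*m+1"
  shows "P a ((P b ^^ n) v) = (P b ^^ n) (P a v)"
  using P_P_pow[OF assms(1,2)] assms(3) by (cases n) (simp_all add: p_bracket_def)

lemma invariant_killed_by_P_pow:
  assumes k: "k \<le> 2*m+1"
  shows "invariant_sub scale m H P Z {v. \<exists>n. (P k ^^ n) v = 0}"
  unfolding invariant_sub_def
proof (intro conjI ballI allI impI)
  show "subspace {v. \<exists>n. (P k ^^ n) v = 0}"
    by (rule subspace_eventually_killed[OF linear_P[OF k]])
  fix v assume "v \<in> {v. \<exists>n. (P k ^^ n) v = 0}"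
  then obtain n where n: "(P k ^^ n) v = 0"
    by blast
  have "(P k ^^ n) (H v) = 0"
    using H_P_pow[OF k, of n v] n endo.linear_0[OF linear_H] by simp
  then show "H v \<in> {v. \<exists>n. (P k ^^ n) v = 0}"
    by blast
  show "Z v \<in> {v. \<exists>n. (P k ^^ n) v = 0}"
    using n by (auto simp: Z_eq endo.linear_scale[OF linear_P_pow[OF k]])
  fix k' assume k': "k' \<le> 2*m+1"
  \<comment> \<open>one more power of \<open>P k\<close> absorbs the commutator term\<close>
  have "(P k ^^ Suc n) (P k' v) = 0"
    using P_P_pow[OF k' k, of n v] n endo.linear_0[OF linear_P[OF k']]
      endo.linear_0[OF linear_P[OF k]]
    by simp
  then show "P k' v \<in> {v. \<exists>n. (P k ^^ n) v = 0}"
    by blast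
qed

lemma P_dual_P_pow_commutator:
  assumes k: "k \<le> 2*m+1" and j: "j \<le> 2*m+1" "j \<noteq> k" "k + j \<noteq> 2*m+1"
  defines "k' \<equiv> 2*m+1-k"
  shows "P k' (P k ((P k ^^ Suc e) ((P j ^^ p) v)))
    = (P k ^^ Suc e) ((P j ^^ p) (P k' (P k v)))
      + (of_nat (Suc e) * p_bracket k' k) *s (P k ^^ Suc e) ((P j ^^ p) v)"
proof -
  have k': "k' \<le> 2*m+1" and "k' + j \<noteq> 2*m+1"
    using j k by (auto simp: k'_def)
  have Pk_Pj: "P k ((P j ^^ p) v) = (P j ^^ p) (P k v)"
    by (rule P_P_pow_commute[OF k j(1,3)])
  have "P k' (P k ((P k ^^ Suc e) ((P j ^^ p) v)))
      = P k' ((P k ^^ Suc e) ((P j ^^ p) (P k v)))"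
    by (simp only: funpow_swap1[of "P k"] Pk_Pj)
  also have "\<dots> = (P k ^^ Suc e) (P k' ((P j ^^ p) (P k v)))
      + (of_nat (Suc e) * p_bracket k' k) *s (P k ^^ e) ((P j ^^ p) (P k v))"
    by (rule P_P_pow[OF k' k])
  also have "P k' ((P j ^^ p) (P k v)) = (P j ^^ p) (P k' (P k v))"
    by (rule P_P_pow_commute[OF k' j(1) \<open>k' + j \<noteq> 2*m+1\<close>])
  also have "(P k ^^ e) ((P j ^^ p) (P k v)) = (P k ^^ Suc e) ((P j ^^ p) v)"
    by (simp only: Pk_Pj[symmetric] funpow_Suc_right o_apply)
  finally show ?thesis .
qed

lemma l_half_relations:
  assumes "m = 0"
  shows "H (P 0 v) = P 0 (H v) + P 0 v" "H (P 1 v) = P 1 (H v) - P 1 v"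
    and "P 1 (P 0 v) = P 0 (P 1 v) + zd *s v"
proof -
  have "p_weight 0 = 1" "p_weight 1 = -1" "p_bracket 1 0 = zd"
    unfolding p_weight_def p_bracket_def heis_coeff_def using assms by simp_all
  then show "H (P 0 v) = P 0 (H v) + P 0 v" "H (P 1 v) = P 1 (H v) - P 1 v"
    and "P 1 (P 0 v) = P 0 (P 1 v) + zd *s v"
    using H_P[of 0 v] H_P[of 1 v] P_P[of 1 0 v] by simp_all
qed

end

locale simple_weight_module = heis_rep +
  assumes simple: "simple_mod scale m H P Z" and weight: "weight_mod scale H"
    and zd_nonzero: "zd \<noteq> 0"
begin

lemma invariant_eq_UNIV: "invariant_sub scale m H P Z S \<Longrightarrow> S \<noteq> {0} \<Longrightarrow> S = UNIV"
  using simple by (auto simp: simple_mod_def)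

lemma gen_sub_eq_UNIV: "v \<noteq> 0 \<Longrightarrow> gen_sub scale m H P Z v = UNIV"
  unfolding gen_sub_def using invariant_eq_UNIV by blast

lemma ex_weight_vector: "\<exists>w \<mu>. w \<noteq> 0 \<and> H w = \<mu> *s w"
proof (rule ccontr)
  assume "\<not> ?thesis"
  then have "span (\<Union>\<mu>. weight_space scale H \<mu>) \<subseteq> {0}"
    by (intro span_minimal) (auto simp: weight_space_def)
  then show False
    using weight simple by (auto simp: weight_mod_def simple_mod_def)
qed

lemma locally_nilpotent_if_kernel:
  assumes k: "k \<le> 2*m+1" and "v \<noteq> 0" "P k v = 0"
  shows "locally_nilpotent k"
proof -
  have "v \<in> {v. \<exists>n. (P k ^^ n) v = 0}"
    using assms(3) by (auto intro: exI[of _ 1])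
  then have "{v. \<exists>n. (P k ^^ n) v = 0} = UNIV"
    using invariant_eq_UNIV[OF invariant_killed_by_P_pow[OF k]] \<open>v \<noteq> 0\<close> by blast
  then show ?thesis
    by (auto simp: locally_nilpotent_def)
qed

lemma P_pow_eq_0_imp:
  assumes "k \<le> 2*m+1" "\<not> locally_nilpotent k" "(P k ^^ n) v = 0"
  shows "v = 0"
  using assms(3)
proof (induction n arbitrary: v)
  case (Suc n)
  then have "P k v = 0"
    by (metis funpow_Suc_right o_apply)
  then show ?case
    using locally_nilpotent_if_kernel assms(1,2) by blast
qed simp

lemma not_locally_nilpotent_dual:
  assumes k: "k \<le> 2*m+1" and nil: "locally_nilpotent k"
  shows "\<not> locally_nilpotent (2*m+1-k)"
proof
  define k' where "k' = 2*m+1-k"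
  assume "locally_nilpotent (2*m+1-k)"
  then have nil': "locally_nilpotent k'"
    by (simp add: k'_def)
  have k': "k' \<le> 2*m+1" and bracket: "p_bracket k k' \<noteq> 0"
    using k p_bracket_nonzero[OF zd_nonzero, of k k'] by (auto simp: k'_def)
  obtain v \<mu> where "v \<noteq> 0" "H v = \<mu> *s v"
    using ex_weight_vector by blast
  moreover obtain n where "(P k ^^ n) v = 0"
    using nil by (auto simp: locally_nilpotent_def)
  ultimately obtain w where w: "w \<noteq> 0" "P k w = 0"
    using funpow_last_nonzero by blast
  \<comment> \<open>on \<open>ker P k\<close>, \<open>P k\<close> undoes \<open>P k'\<close> up to the nonzero factor \<open>(n + 1) p_bracket k k'\<close>\<close>
  have "(P k' ^^ n) w \<noteq> 0" for n
  proof (induction n)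
    case (Suc n)
    have "P k ((P k' ^^ Suc n) w) = (of_nat (Suc n) * p_bracket k k') *s (P k' ^^ n) w"
      using P_P_pow[OF k k', of n w] w(2) endo.linear_0[OF linear_P_pow[OF k', of "Suc n"]]
      by (simp del: funpow.simps)
    then show ?case
      using Suc bracket endo.linear_0[OF linear_P[OF k]] by (auto simp del: of_nat_Suc)
  qed (simp add: w)
  moreover obtain N where "(P k' ^^ N) w = 0"
    using nil' by (auto simp: locally_nilpotent_def)
  ultimately show False
    by blast
qed

lemma ex_common_kernel_weight_vector:
  assumes "finite K" "K \<subseteq> {..2*m+1}" "\<forall>k\<in>K. \<forall>k'\<in>K. k + k' \<noteq> 2*m+1"
    and "\<forall>k\<in>K. locally_nilpotent k"
  shows "\<exists>v \<mu>. v \<noteq> 0 \<and> H v = \<mu> *s v \<and> (\<forall>k\<in>K. P k v = 0)"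
  using assms
proof (induction K rule: finite_induct)
  case empty
  then show ?case
    using ex_weight_vector by auto
next
  case (insert k K)
  then obtain v \<mu> where v: "v \<noteq> 0" "H v = \<mu> *s v" "\<forall>k\<in>K. P k v = 0"
    by auto
  have k: "k \<le> 2*m+1"
    using insert.prems by auto
  obtain n where "(P k ^^ n) v = 0"
    using insert.prems(3) unfolding locally_nilpotent_def by blast
  then obtain j where j: "(P k ^^ j) v \<noteq> 0" "P k ((P k ^^ j) v) = 0"
    using funpow_last_nonzero v(1) by blast
  have "P k' ((P k ^^ j) v) = 0" if "k' \<in> K" for k'
  proof -
    have "P k' ((P k ^^ j) v) = (P k ^^ j) (P k' v)"
      using that insert.prems k by (intro P_P_pow_commute) auto
    then show ?thesis
      using v(3) that endo.linear_0[OF linear_P_pow[OF k]] by simp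
  qed
  then show ?case
    using j weight_P_pow[OF k v(2)] by blast
qed

lemma highest_weight_if_lower_nilpotent:
  assumes "\<forall>k\<le>m. locally_nilpotent k"
  shows "highest_weight_mod scale m H P Z"
proof -
  obtain v \<mu> where "v \<noteq> 0" "H v = \<mu> *s v" "\<forall>k\<in>{..m}. P k v = 0"
    using ex_common_kernel_weight_vector[of "{..m}"] assms by auto
  then show ?thesis
    unfolding highest_weight_mod_def using gen_sub_eq_UNIV by auto
qed

lemma lowest_weight_if_upper_nilpotent:
  assumes "\<forall>k. m+1 \<le> k \<and> k \<le> 2*m+1 \<longrightarrow> locally_nilpotent k"
  shows "lowest_weight_mod scale m H P Z"
proof -
  obtain v \<mu> where "v \<noteq> 0" "H v = \<mu> *s v" "\<forall>k\<in>{m+1..2*m+1}. P k v = 0"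
    using ex_common_kernel_weight_vector[of "{m+1..2*m+1}"] assms by auto
  then show ?thesis
    unfolding lowest_weight_mod_def using gen_sub_eq_UNIV by auto
qed

text \<open>For \<open>m = 0\<close> this is the Casimir element \<open>h - p\<^sub>1 p\<^sub>0 / z\<close>; on \<open>D(a, z)\<close> it acts as \<open>\<mu> + a\<close>.\<close>

definition casimir where
  "casimir v = H v - (1 / zd) *s P 1 (P 0 v)"

lemma linear_casimir: "Vector_Spaces.linear scale scale casimir"
proof -
  have "Vector_Spaces.linear scale scale (P 1 \<circ> P 0)"
    by (rule Vector_Spaces.linear_compose[OF linear_P linear_P]) simp_all
  then have "Vector_Spaces.linear scale scale (\<lambda>v. H v - (1 / zd) *s (P 1 \<circ> P 0) v)"
    by (intro endo.linear_compose_sub linear_H endo.linear_compose_scale_right)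
  then show ?thesis
    by (simp add: casimir_def[abs_def])
qed

lemma casimir_H:
  assumes "m = 0"
  shows "casimir (H v) = H (casimir v)"
proof -
  have "H (P 1 (P 0 v)) = P 1 (H (P 0 v)) - P 1 (P 0 v)"
    by (rule l_half_relations(2)[OF assms])
  also have "\<dots> = P 1 (P 0 (H v))"
    by (simp add: l_half_relations(1)[OF assms] endo.linear_add[OF linear_P] del: One_nat_def)
  finally show ?thesis
    by (simp add: casimir_def endo.linear_diff[OF linear_H] endo.linear_scale[OF linear_H])
qed

lemma casimir_P:
  assumes "m = 0" "k \<le> 1"
  shows "casimir (P k v) = P k (casimir v)"
proof -
  have "k = 0 \<or> k = 1"
    using assms(2) by auto
  then show ?thesis
    using zd_nonzero
    by (auto simp: casimir_def l_half_relations[OF assms(1)] endo.linear_diff[OF linear_P]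
        endo.linear_add[OF linear_P] endo.linear_scale[OF linear_P] scale_right_distrib
        scale_right_diff_distrib simp del: One_nat_def)
qed

end

locale dense_half_module = simple_weight_module +
  fixes lam \<alpha> :: complex and v0
  assumes m_0: "m = 0"
    and not_nil: "\<not> locally_nilpotent 0" "\<not> locally_nilpotent 1"
    and casimir_eq: "casimir v = \<alpha> *s v"
    and v0: "v0 \<noteq> 0" "H v0 = lam *s v0"
begin

\<comment> \<open>otherwise \<open>simp\<close> turns \<open>P 1\<close> into \<open>P (Suc 0)\<close> and the rules about \<open>P 1\<close> stop matching\<close>
declare One_nat_def [simp del]

lemma linear_P_0: "Vector_Spaces.linear scale scale (P 0)"
  and linear_P_1: "Vector_Spaces.linear scale scale (P 1)"
  by (simp_all add: linear_P)

lemma P_0_pow_eq_0_imp: "(P 0 ^^ n) v = 0 \<Longrightarrow> v = 0"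
  by (rule P_pow_eq_0_imp[OF _ not_nil(1)]) simp_all

lemma P_1_pow_eq_0_imp: "(P 1 ^^ n) v = 0 \<Longrightarrow> v = 0"
  by (rule P_pow_eq_0_imp[OF _ not_nil(2)]) simp_all

lemma P_0_eq_0_imp: "P 0 v = 0 \<Longrightarrow> v = 0"
  by (rule P_0_pow_eq_0_imp[of "Suc 0"]) simp

lemma P_1_eq_0_imp: "P 1 v = 0 \<Longrightarrow> v = 0"
  by (rule P_1_pow_eq_0_imp[of "Suc 0"]) simp

lemma weight_P_0_pow: "H v = \<mu> *s v \<Longrightarrow> H ((P 0 ^^ n) v) = (\<mu> + of_nat n) *s (P 0 ^^ n) v"
proof -
  have "p_weight 0 = 1"
    unfolding p_weight_def using m_0 by simp
  then show "H v = \<mu> *s v \<Longrightarrow> ?thesis"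
    using weight_P_pow[of 0 v \<mu> n] by simp
qed

lemma weight_P_1_pow: "H v = \<mu> *s v \<Longrightarrow> H ((P 1 ^^ n) v) = (\<mu> - of_nat n) *s (P 1 ^^ n) v"
proof -
  have "p_weight 1 = -1"
    unfolding p_weight_def using m_0 by simp
  then show "H v = \<mu> *s v \<Longrightarrow> ?thesis"
    using weight_P_pow[of 1 v \<mu> n] by simp
qed

lemma P_1_P_0_weight:
  assumes "H w = \<nu> *s w"
  shows "P 1 (P 0 w) = (zd * (\<nu> - \<alpha>)) *s w"
proof -
  have "(1 / zd) *s P 1 (P 0 w) = (\<nu> - \<alpha>) *s w"
    using casimir_eq[of w] assms by (simp add: casimir_def scale_left_diff_distrib algebra_simps)
  then have "zd *s ((1 / zd) *s P 1 (P 0 w)) = zd *s ((\<nu> - \<alpha>) *s w)"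
    by simp
  then show ?thesis
    using zd_nonzero by simp
qed

lemma P_0_P_1_weight:
  assumes "H w = \<nu> *s w"
  shows "P 0 (P 1 w) = (zd * (\<nu> - \<alpha> - 1)) *s w"
  using l_half_relations(3)[OF m_0, of w] P_1_P_0_weight[OF assms]
  by (simp add: algebra_simps scale_left_diff_distrib)

definition D_param :: complex where
  "D_param = \<alpha> - lam"

lemma ex_weight_vector_shift: "\<exists>v. v \<noteq> 0 \<and> H v = (lam + of_int s) *s v"
proof (cases s rule: int_cases2)
  case (nonneg n)
  then show ?thesis
    using weight_P_0_pow[OF v0(2), of n] P_0_pow_eq_0_imp[of n v0] v0(1) by auto
next
  case (nonpos n)
  then show ?thesis
    using weight_P_1_pow[OF v0(2), of n] P_1_pow_eq_0_imp[of n v0] v0(1) by auto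
qed

text \<open>On the weight space \<open>lam + s\<close> the operator \<open>P 1 \<circ> P 0\<close> is the scalar \<open>zd (s - D_param)\<close>,
  which cannot vanish because \<open>P 0\<close> and \<open>P 1\<close> are injective.\<close>

lemma D_param_not_int: "D_param \<notin> \<int>"
proof
  assume "D_param \<in> \<int>"
  then obtain s where "D_param = of_int s"
    by (auto elim: Ints_cases)
  moreover obtain v where v: "v \<noteq> 0" "H v = (lam + of_int s) *s v"
    using ex_weight_vector_shift by blast
  ultimately have "lam + of_int s - \<alpha> = 0"
    unfolding D_param_def by (simp add: diff_eq_eq)
  then have "P 1 (P 0 v) = 0"
    using P_1_P_0_weight[OF v(2)] by simp
  then show False
    using P_0_eq_0_imp P_1_eq_0_imp v(1) by blast
qed

lemma nat_minus_D_param: "of_nat k - D_param \<noteq> 0"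
  using D_param_not_int by (metis Ints_of_nat right_minus_eq)

text \<open>The basis vectors of negative index, normalised so that \<open>P 1\<close> maps each to its predecessor.\<close>

primrec lower :: "nat \<Rightarrow> 'a" where
  "lower 0 = v0"
| "lower (Suc k) = (1 / (zd * (of_nat k - D_param))) *s P 0 (lower k)"

lemma lower_weight: "H (lower k) = (lam + of_nat k) *s lower k"
proof (induction k)
  case (Suc k)
  then have "H (P 0 (lower k)) = (lam + of_nat (Suc k)) *s P 0 (lower k)"
    using weight_P_0_pow[OF Suc.IH, of "Suc 0"] by (simp add: add.assoc)
  then show ?case
    by (simp only: lower.simps endo.linear_scale[OF linear_H] scale_left_commute)
qed (simp add: v0)

lemma lower_nonzero: "lower k \<noteq> 0"
  by (induction k) (use v0 P_0_eq_0_imp zd_nonzero nat_minus_D_param in auto)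

lemma P_0_lower: "P 0 (lower k) = (zd * (of_nat k - D_param)) *s lower (Suc k)"
  using zd_nonzero nat_minus_D_param[of k] by simp

lemma P_1_lower_Suc: "P 1 (lower (Suc k)) = lower k"
proof -
  have "P 1 (lower (Suc k)) = (1 / (zd * (of_nat k - D_param))) *s P 1 (P 0 (lower k))"
    by (simp only: lower.simps endo.linear_scale[OF linear_P_1])
  also have "\<dots> = ((1 / (zd * (of_nat k - D_param))) * (zd * (lam + of_nat k - \<alpha>))) *s lower k"
    by (simp only: P_1_P_0_weight[OF lower_weight] scale_scale)
  also have "(1 / (zd * (of_nat k - D_param))) * (zd * (lam + of_nat k - \<alpha>)) = 1"
    using zd_nonzero nat_minus_D_param[of k] by (simp add: D_param_def)
  finally show ?thesis
    by simp
qed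

definition D_basis :: "int \<Rightarrow> 'a" where
  "D_basis i = (if 0 \<le> i then (P 1 ^^ nat i) v0 else lower (nat (- i)))"

lemma D_basis_nonneg: "D_basis (int k) = (P 1 ^^ k) v0"
  by (simp add: D_basis_def)

lemma D_basis_nonpos: "D_basis (- int k) = lower k"
  by (cases "k = 0") (simp_all add: D_basis_def)

lemma D_basis_weight: "H (D_basis i) = (lam - of_int i) *s D_basis i"
proof (cases i rule: int_cases2)
  case (nonneg k)
  then show ?thesis
    using weight_P_1_pow[OF v0(2), of k] by (simp add: D_basis_nonneg)
next
  case (nonpos k)
  then show ?thesis
    using lower_weight[of k] by (simp add: D_basis_nonpos)
qed

lemma D_basis_nonzero: "D_basis i \<noteq> 0"
  by (cases i rule: int_cases2)
    (use P_1_pow_eq_0_imp v0(1) lower_nonzero in \<open>auto simp: D_basis_nonneg D_basis_nonpos\<close>)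

lemma P_1_D_basis: "P 1 (D_basis i) = D_basis (i + 1)"
proof (cases i rule: int_cases)
  case (nonneg k)
  then have "i + 1 = int (Suc k)"
    by simp
  then show ?thesis
    by (simp only: nonneg D_basis_nonneg funpow.simps o_apply)
next
  case (neg k)
  then have "i + 1 = - int k"
    by simp
  then show ?thesis
    by (simp only: neg D_basis_nonpos P_1_lower_Suc)
qed

lemma P_0_D_basis: "P 0 (D_basis i) = (- zd * (D_param + of_int i)) *s D_basis (i - 1)"
proof (cases i rule: int_cases)
  case (nonneg k)
  show ?thesis
  proof (cases k)
    case 0
    then have "D_basis i = lower 0" "D_basis (i - 1) = lower (Suc 0)"
      and "- zd * (D_param + of_int i) = zd * (of_nat 0 - D_param)"
      using nonneg by (simp_all add: D_basis_def)
    then show ?thesis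
      by (simp only: P_0_lower)
  next
    case (Suc j)
    then have "i - 1 = int j" "- zd * (D_param + of_int i) = zd * (lam - of_nat j - \<alpha> - 1)"
      using nonneg by (simp_all add: D_param_def algebra_simps)
    then show ?thesis
      using P_0_P_1_weight[OF weight_P_1_pow[OF v0(2), of j]]
      by (simp only: nonneg Suc D_basis_nonneg funpow.simps o_apply)
  qed
next
  case (neg k)
  have "i - 1 = - int (Suc (Suc k))"
    "- zd * (D_param + of_int i) = zd * (of_nat (Suc k) - D_param)"
    by (simp_all add: neg algebra_simps)
  then show ?thesis
    using P_0_lower[of "Suc k"] by (simp only: neg D_basis_nonpos)
qed

lemma span_D_basis: "span (range D_basis) = UNIV"
proof (rule invariant_eq_UNIV)
  have stable: "F v \<in> span (range D_basis)"
    if F: "F \<in> {H, Z, P 0, P 1}" and v: "v \<in> span (range D_basis)" for F v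
  proof (rule linear_stable_span[OF _ _ v])
    show "Vector_Spaces.linear scale scale F"
      using F linear_H linear_P_0 linear_P_1 hmod by (auto simp: is_hmod_def)
    show "\<forall>w\<in>range D_basis. F w \<in> span (range D_basis)"
    proof -
      have "c *s D_basis j \<in> span (range D_basis)" for c j
        by (intro span_scale span_base) simp
      then show ?thesis
        using F by (auto simp: D_basis_weight Z_eq P_0_D_basis P_1_D_basis span_base span_neg)
    qed
  qed
  show "invariant_sub scale m H P Z (span (range D_basis))"
    unfolding invariant_sub_def
  proof (intro conjI ballI allI impI)
    fix v k assume v: "v \<in> span (range D_basis)" and "k \<le> 2*m+1"
    then have "k = 0 \<or> k = 1"
      using m_0 by auto
    then show "P k v \<in> span (range D_basis)"
      using stable v by auto
  qed (use stable in auto)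
  show "span (range D_basis) \<noteq> {0}"
    using D_basis_nonzero[of 0] span_base[of "D_basis 0" "range D_basis"] by auto
qed

lemma iso_D_D_basis: "iso_D scale H P Z D_param zd lam"
  unfolding iso_D_def
proof (intro exI conjI allI)
  have "inj (\<lambda>i :: int. lam - of_int i)"
    by (auto simp: inj_on_def)
  then show "inj D_basis" "independent (range D_basis)"
    using independent_eigenvector_family[OF linear_H, of UNIV D_basis "\<lambda>i. lam - of_int i"]
      D_basis_nonzero D_basis_weight by auto
qed (simp_all add: span_D_basis P_1_D_basis P_0_D_basis Z_eq D_basis_weight)

end

locale coset_supported_module = simple_weight_module +
  fixes lam :: complex
  assumes supp_coset: "supp scale H \<subseteq> {lam + of_int n | n. True}"
    and fin_dim: "fin_dim_sub scale (weight_space scale H lam)"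
begin

lemma weight_in_coset: "w \<noteq> 0 \<Longrightarrow> H w = \<mu> *s w \<Longrightarrow> \<exists>t. \<mu> = lam + of_int t"
  using supp_coset by (auto simp: supp_def weight_space_def)

lemma weight_space_lam_finite_span:
  obtains B where "finite B" "span B = {v. H v = lam *s v}"
  using fin_dim by (auto simp: fin_dim_sub_def weight_space_def)

lemma ex_weight_vector_lam:
  assumes k: "k \<le> m" and j: "m < j" "j \<le> 2*m+1"
    and not_nil: "\<not> locally_nilpotent k" "\<not> locally_nilpotent j" and "k = m \<or> j = m+1"
  shows "\<exists>v. v \<noteq> 0 \<and> H v = lam *s v"
proof -
  define p where "p = 2 * (m - k) + 1"
  define q where "q = 2 * (j - m) - 1"
  have kb: "k \<le> 2*m+1"
    using k by simp
  obtain w \<mu> where w: "w \<noteq> 0" "H w = \<mu> *s w"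
    using ex_weight_vector by blast
  obtain t where t: "\<mu> = lam + of_int t"
    using weight_in_coset[OF w] by blast
  have "p = 1 \<or> q = 1" "p \<ge> 1" "q \<ge> 1"
    using assms by (auto simp: p_def q_def)
  then obtain a b :: nat where ab: "t + int a * int p = int b * int q"
    using ex_nat_combination by blast
  define v where "v = (P k ^^ a) ((P j ^^ b) w)"
  have "H v = ((\<mu> + of_nat b * - of_nat q) + of_nat a * of_nat p) *s v"
    unfolding v_def using weight_P_pow[OF kb weight_P_pow[OF j(2) w(2)]]
    by (simp add: p_weight_lower[OF k] p_weight_upper[OF j(1)] p_def q_def)
  also have "(\<mu> + of_nat b * - of_nat q) + of_nat a * of_nat p = lam"
    using t arg_cong[OF ab, of "of_int :: int \<Rightarrow> complex"] by (simp add: add_diff_eq)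
  finally have "H v = lam *s v" .
  moreover have "v \<noteq> 0"
    unfolding v_def using P_pow_eq_0_imp[OF kb not_nil(1)] P_pow_eq_0_imp[OF j(2) not_nil(2)] w(1)
    by blast
  ultimately show ?thesis
    by blast
qed

lemma commuting_operator_scalar:
  assumes C: "Vector_Spaces.linear scale scale C"
    and C_H: "\<And>v. C (H v) = H (C v)" and C_P: "\<And>k v. k \<le> 2*m+1 \<Longrightarrow> C (P k v) = P k (C v)"
    and w: "w \<noteq> 0" "H w = lam *s w"
  shows "\<exists>\<alpha>. \<forall>v. C v = \<alpha> *s v"
proof -
  obtain B where B: "finite B" "span B = {v. H v = lam *s v}"
    using weight_space_lam_finite_span by blast
  have "\<forall>v\<in>span B. C v \<in> span B"
    using B(2) C_H[symmetric] by (auto simp: endo.linear_scale[OF C])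
  then obtain v0 \<alpha> where v0: "v0 \<noteq> 0" "C v0 = \<alpha> *s v0"
    using ex_eigenvector_in_finite_span[OF C B(1)] w B(2) by blast
  define E where "E = {v. C v - \<alpha> *s v = 0}"
  have "invariant_sub scale m H P Z E"
    unfolding invariant_sub_def
  proof (intro conjI ballI allI impI)
    show "subspace E"
      unfolding E_def
      using endo.linear_subspace_kernel[OF endo.linear_compose_sub[OF C linear_scale_self]] by simp
    fix v assume "v \<in> E"
    then show "H v \<in> E" "Z v \<in> E" "\<And>k. k \<le> 2*m+1 \<Longrightarrow> P k v \<in> E"
      by (auto simp: E_def C_H C_P Z_eq endo.linear_scale[OF C] endo.linear_scale[OF linear_H]
          endo.linear_scale[OF linear_P] scale_left_commute)
  qed
  moreover have "v0 \<in> E"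
    using v0 by (simp add: E_def)
  ultimately have "E = UNIV"
    using invariant_eq_UNIV v0(1) by blast
  then show ?thesis
    by (auto simp: E_def)
qed

lemma some_locally_nilpotent:
  assumes k: "k \<le> m" and j: "m < j" "j \<le> 2*m+1" and "k + j \<noteq> 2*m+1" and "k = m \<or> j = m+1"
  shows "locally_nilpotent k \<or> locally_nilpotent j"
proof (rule ccontr)
  assume "\<not> ?thesis"
  then have not_nil: "\<not> locally_nilpotent k" "\<not> locally_nilpotent j"
    by auto
  define k' where "k' = 2*m+1-k"
  define p where "p = 2 * (m - k) + 1"
  define q where "q = 2 * (j - m) - 1"
  obtain e where e: "q = Suc e"
    using j by (auto simp: q_def intro: that[of "2 * (j - m) - 2"])
  have kb: "k \<le> 2*m+1" and k': "k' \<le> 2*m+1" "m < k'"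
    using k by (auto simp: k'_def)
  have weights: "p_weight k = of_nat p" "p_weight j = - of_nat q" "p_weight k' = - of_nat p"
    using p_weight_lower[OF k] p_weight_upper[OF j(1)] p_weight_upper[OF k'(2)] k
    by (simp_all add: p_def q_def k'_def Suc_diff_le)
  define X where "X = (P k ^^ q) \<circ> (P j ^^ p)"
  define N where "N = P k' \<circ> P k"
  define s where "s = of_nat q * p_bracket k' k"
  have linear_X: "Vector_Spaces.linear scale scale X"
    unfolding X_def
    by (rule Vector_Spaces.linear_compose[OF linear_P_pow linear_P_pow]) (use j kb in simp_all)
  have linear_N: "Vector_Spaces.linear scale scale N"
    unfolding N_def
    by (rule Vector_Spaces.linear_compose[OF linear_P linear_P]) (use k' kb in simp_all)
  have weight_0: "H (X v) = \<mu> *s X v" "H (N v) = \<mu> *s N v" if "H v = \<mu> *s v" for v \<mu>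
  proof -
    show "H (X v) = \<mu> *s X v"
      using weight_P_pow[OF kb weight_P_pow[OF j(2) that], of q]
      by (simp add: X_def weights)
    show "H (N v) = \<mu> *s N v"
      using weight_P_pow[OF k'(1) weight_P_pow[OF kb that, of 1], of 1]
      by (simp add: N_def weights)
  qed
  have ladder: "N (X v) = X (N v) + s *s X v" for v
    using P_dual_P_pow_commutator[OF kb j(2), of e p v] j(1) k \<open>k + j \<noteq> 2*m+1\<close>
    by (simp add: X_def N_def s_def e k'_def)
  have "s \<noteq> 0"
    using p_bracket_nonzero[OF zd_nonzero, of k' k] kb by (simp add: s_def k'_def e del: of_nat_Suc)
  have X_inj: "X v = 0 \<Longrightarrow> v = 0" for v
    using P_pow_eq_0_imp[OF kb not_nil(1), of q "(P j ^^ p) v"]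
      P_pow_eq_0_imp[OF j(2) not_nil(2), of p v]
    by (simp add: X_def)
  obtain B where B: "finite B" "span B = {v. H v = lam *s v}"
    using weight_space_lam_finite_span by blast
  obtain w where "w \<noteq> 0" "H w = lam *s w"
    using ex_weight_vector_lam[OF k j not_nil] assms(5) by blast
  then show False
    using no_injective_ladder_on_finite_span[OF linear_N linear_X ladder \<open>s \<noteq> 0\<close> X_inj B(1)]
      B(2) weight_0 by blast
qed

lemma lower_or_upper_locally_nilpotent:
  assumes "m \<ge> 1"
  shows "(\<forall>k\<le>m. locally_nilpotent k) \<or> (\<forall>k. m+1 \<le> k \<and> k \<le> 2*m+1 \<longrightarrow> locally_nilpotent k)"
proof (rule ccontr)
  assume "\<not> ?thesis"
  then obtain k j where k: "k \<le> m" "\<not> locally_nilpotent k"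
    and j: "m+1 \<le> j" "j \<le> 2*m+1" "\<not> locally_nilpotent j"
    by auto
  show False
  proof (cases "locally_nilpotent m")
    case True
    then have "\<not> locally_nilpotent (m+1)"
      using not_locally_nilpotent_dual[of m] by simp
    moreover have "k \<noteq> m"
      using True k by auto
    ultimately show False
      using some_locally_nilpotent[of k "m+1"] k by auto
  next
    case m_not_nil: False
    show False
    proof (cases "j = m+1")
      case False
      then show False
        using some_locally_nilpotent[of m j] m_not_nil j by auto
    next
      case True
      have "\<not> locally_nilpotent 0 \<or> \<not> locally_nilpotent (2*m+1)"
        using not_locally_nilpotent_dual[of 0] by auto
      then show False
        using some_locally_nilpotent[of 0 "m+1"] some_locally_nilpotent[of m "2*m+1"]
          m_not_nil j True assms by auto
    qed
  qed
qed

lemma iso_D_if_not_locally_nilpotent: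
  assumes m_0: "m = 0" and not_nil: "\<not> locally_nilpotent 0" "\<not> locally_nilpotent 1"
  shows "\<exists>a \<mu>. a \<notin> \<int> \<and> iso_D scale H P Z a zd \<mu>"
proof -
  obtain w where w: "w \<noteq> 0" "H w = lam *s w"
    using ex_weight_vector_lam[of 0 1] m_0 not_nil by auto
  have "casimir (P k v) = P k (casimir v)" if "k \<le> 2*m+1" for k v
    using casimir_P[OF m_0] that m_0 by simp
  then obtain \<alpha> where "\<forall>v. casimir v = \<alpha> *s v"
    using commuting_operator_scalar[OF linear_casimir casimir_H[OF m_0] _ w] by blast
  then interpret dense_half_module scale m H Z P zd lam \<alpha> w
    using m_0 not_nil w by unfold_locales auto
  show ?thesis
    using D_param_not_int iso_D_D_basis by blast
qed

lemma l_half_classification: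
  assumes m_0: "m = 0"
  shows "highest_weight_mod scale m H P Z \<or> lowest_weight_mod scale m H P Z
    \<or> (\<exists>a \<mu>. a \<notin> \<int> \<and> iso_D scale H P Z a zd \<mu>)"
proof -
  have "(\<forall>k\<le>m. locally_nilpotent k) \<longleftrightarrow> locally_nilpotent 0"
    and "(\<forall>k. m+1 \<le> k \<and> k \<le> 2*m+1 \<longrightarrow> locally_nilpotent k) \<longleftrightarrow> locally_nilpotent 1"
    using m_0 le_antisym by fastforce+
  then show ?thesis
    using highest_weight_if_lower_nilpotent lowest_weight_if_upper_nilpotent
      iso_D_if_not_locally_nilpotent[OF m_0] by blast
qed

end

theorem mainTheorem15:
  fixes scale :: "complex \<Rightarrow> 'v::ab_group_add \<Rightarrow> 'v"
    and m :: nat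
    and H Z :: "'v \<Rightarrow> 'v" and P :: "nat \<Rightarrow> 'v \<Rightarrow> 'v"
    and zd lam :: complex
  assumes "is_hmod scale m H P Z"
    and "simple_mod scale m H P Z"
    and "weight_mod scale H"
    and "zd \<noteq> 0" and "\<forall>v. Z v = scale zd v"
    and "supp scale H \<subseteq> {lam + of_int n | n. True}"
    and "fin_dim_sub scale (weight_space scale H lam)"
  shows "(m = 0 \<longrightarrow> highest_weight_mod scale m H P Z \<or> lowest_weight_mod scale m H P Z \<or>
            (\<exists>a \<mu>. a \<notin> \<int> \<and> iso_D scale H P Z a zd \<mu>))
       \<and> (m \<ge> 1 \<longrightarrow> highest_weight_mod scale m H P Z \<or> lowest_weight_mod scale m H P Z)"
proof -
  have "vector_space scale"
    using assms(1) by (simp add: is_hmod_def)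
  then interpret coset_supported_module scale m H Z P zd lam
    using assms
    by (simp add: coset_supported_module_def coset_supported_module_axioms_def
        complex_vector_space_def simple_weight_module_def simple_weight_module_axioms_def
        heis_rep_def heis_rep_axioms_def)
  show ?thesis
    using l_half_classification lower_or_upper_locally_nilpotent
      highest_weight_if_lower_nilpotent lowest_weight_if_upper_nilpotent by blast
qed

end
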